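(* There exist constants $K,k,D>0$ such that for all positive integers $n\ge m$ there exists an indexed family $\mathcal F=(f_1,\dots,f_T)$ of functions $f_i\colon\mathbb B^n\to\mathbb B^m$ with $T\le K\,2^m n^k$ having the following property: for every $b\in\mathbb B^m$ and every set of indices $I\subseteq\{1,\dots,T\}$ with $\#I\ge T/2$, $$\#\{a\in\mathbb B^n : f_i(a)\ne b \text{ for all } i\in I\}\le D\cdot 2^m.$$
   Context: $\mathbb B^k$ denotes the set of binary strings of length $k$. *)

theory Defs
  imports Complex_Main
begin

definition bstr :: "nat \<Rightarrow> bool list set" where
  "bstr k = {xs. length xs = k}"

end

theory Submission
  imports Defs "HOL-Library.FuncSet"
begin

text \<open>
  The family is constructed by the probabilistic method, phrased as counting.
  Put N = 2^m, T = 4nN and s = 8N, and consider all maps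
  G : {1..T} \<times> B^n \<rightarrow> B^m (the functions f_i = G(i,-)). Call a triple (b, I, A)
  with b \<in> B^m, I \<subseteq> {1..T} of size at least T/2 and A \<subseteq> B^n of size s
  "bad" for G if no f_i with i \<in> I hits b on A. For a fixed triple, at least
  |I| s \<ge> 4TN of the values of G must avoid b, so since (1 - 1/N)^N \<le> 1/2 at
  most a fraction 2^(-4T) of all maps is bad for it; there are fewer than
  2^(4T) triples, so the union bound yields a map with no bad triple.
  For such a map, fewer than s = 8 \<cdot> 2^m strings avoid b under all f_i, i \<in> I,
  which gives the theorem with K = 4, k = 1, D = 8.
\<close>

lemma bstr_as_lists: "bstr k = {xs. set xs \<subseteq> (UNIV :: bool set) \<and> length xs = k}"
  by (auto simp: bstr_def)

lemma finite_bstr: "finite (bstr k)"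
  unfolding bstr_as_lists by (rule finite_lists_length_eq) simp

lemma card_bstr: "card (bstr k) = 2 ^ k"
  unfolding bstr_as_lists using card_lists_length_eq[of "UNIV :: bool set" k] by simp

lemma union_bound_avoidance:
  fixes \<Omega> :: "'a set" and S :: "'z \<Rightarrow> 'a set"
  assumes "finite \<Omega>" "\<Omega> \<noteq> {}" "finite Z"
    and sub: "\<And>z. z \<in> Z \<Longrightarrow> S z \<subseteq> \<Omega>"
    and small: "\<And>z. z \<in> Z \<Longrightarrow> card (S z) * M \<le> card \<Omega>"
    and few: "card Z < M"
  shows "\<exists>x\<in>\<Omega>. \<forall>z\<in>Z. x \<notin> S z"
proof -
  have "card (\<Union>z\<in>Z. S z) * M \<le> (\<Sum>z\<in>Z. card (S z)) * M"
    by (rule mult_right_mono[OF card_UN_le[OF \<open>finite Z\<close>]]) simp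
  also have "\<dots> = (\<Sum>z\<in>Z. card (S z) * M)"
    by (rule sum_distrib_right)
  also have "\<dots> \<le> (\<Sum>z\<in>Z. card \<Omega>)"
    by (rule sum_mono) (rule small)
  also have "\<dots> = card Z * card \<Omega>"
    by simp
  also have "\<dots> < M * card \<Omega>"
    using few assms(1,2) by (intro mult_strict_right_mono) (auto simp: card_gt_0_iff)
  finally have "card (\<Union>z\<in>Z. S z) < card \<Omega>"
    by (simp only: mult.commute[of M] mult_less_cancel2)
  then have "\<not> \<Omega> \<subseteq> (\<Union>z\<in>Z. S z)"
    using card_mono[of "\<Union>z\<in>Z. S z" \<Omega>] \<open>finite \<Omega>\<close> sub by (meson UN_least finite_subset not_le)
  then show ?thesis
    by blast
qed

lemma card_maps_avoiding:
  assumes "finite D" "E \<subseteq> D" "b \<in> Y" "finite Y"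
  shows "card {G \<in> PiE D (\<lambda>_. Y). \<forall>x\<in>E. G x \<noteq> b}
           = (card Y - 1) ^ card E * card Y ^ (card D - card E)"
proof -
  let ?Y = "\<lambda>x. if x \<in> E then Y - {b} else Y"
  have "{G \<in> PiE D (\<lambda>_. Y). \<forall>x\<in>E. G x \<noteq> b} = PiE D ?Y"
  proof (intro equalityI subsetI)
    fix G
    assume "G \<in> {G \<in> PiE D (\<lambda>_. Y). \<forall>x\<in>E. G x \<noteq> b}"
    then have G: "G \<in> PiE D (\<lambda>_. Y)" and avoid: "\<forall>x\<in>E. G x \<noteq> b"
      by simp_all
    show "G \<in> PiE D ?Y"
    proof (rule PiE_I)
      show "G x \<in> ?Y x" if "x \<in> D" for x
        using PiE_mem[OF G that] avoid by simp
      show "G x = undefined" if "x \<notin> D" for x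
        using PiE_arb[OF G that] .
    qed
  next
    fix G
    assume G: "G \<in> PiE D ?Y"
    have "G \<in> PiE D (\<lambda>_. Y)"
    proof (rule PiE_I)
      show "G x \<in> Y" if "x \<in> D" for x
        using PiE_mem[OF G that] by (simp split: if_splits)
      show "G x = undefined" if "x \<notin> D" for x
        using PiE_arb[OF G that] .
    qed
    moreover have "G x \<noteq> b" if "x \<in> E" for x
      using PiE_mem[OF G, of x] that \<open>E \<subseteq> D\<close> by (simp add: subsetD)
    ultimately show "G \<in> {G \<in> PiE D (\<lambda>_. Y). \<forall>x\<in>E. G x \<noteq> b}"
      by blast
  qed
  then have "card {G \<in> PiE D (\<lambda>_. Y). \<forall>x\<in>E. G x \<noteq> b} = (\<Prod>x\<in>D. card (?Y x))"
    using \<open>finite D\<close> by (simp add: card_PiE)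
  also have "\<dots> = (\<Prod>x\<in>D. if x \<in> E then card Y - 1 else card Y)"
    using assms by (intro prod.cong) auto
  also have "\<dots> = (card Y - 1) ^ card (D \<inter> E) * card Y ^ card (D - E)"
    using \<open>finite D\<close> by (simp add: prod.If_cases Diff_eq)
  also have "\<dots> = (card Y - 1) ^ card E * card Y ^ (card D - card E)"
    using assms by (simp add: Int_absorb1 card_Diff_subset finite_subset)
  finally show ?thesis .
qed

lemma power_trade_mono:
  fixes a c :: nat
  assumes "a \<le> c" "r \<le> q" "q \<le> U"
  shows "a ^ q * c ^ (U - q) \<le> a ^ r * c ^ (U - r)"
proof -
  have "a ^ q * c ^ (U - q) = a ^ r * (a ^ (q - r) * c ^ (U - q))"
    using assms by (simp add: power_add[symmetric])
  also have "\<dots> \<le> a ^ r * (c ^ (q - r) * c ^ (U - q))"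
    using assms by (intro mult_left_mono mult_right_mono power_mono) auto
  also have "\<dots> = a ^ r * c ^ (U - r)"
    using assms by (simp add: power_add[symmetric])
  finally show ?thesis .
qed

text \<open>The estimate (1 - 1/N)^N \<le> e^(-1) \<le> 1/2, cleared of denominators.\<close>

lemma two_mult_pred_power_le:
  fixes N :: nat
  assumes "N \<ge> 1"
  shows "2 * (N - 1) ^ N \<le> N ^ N"
proof -
  have N: "real N > 0"
    using assms by simp
  have "1 - 1 / real N \<le> exp (- (1 / real N))"
    using exp_ge_add_one_self[of "- (1 / real N)"] by simp
  then have "(1 - 1 / real N) ^ N \<le> exp (- (1 / real N)) ^ N"
    using assms by (intro power_mono) (auto simp: field_simps)
  also have "\<dots> = exp (- 1)"
    using N by (simp add: exp_of_nat_mult[symmetric])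
  also have "\<dots> \<le> 1 / 2"
    using exp_ge_add_one_self[of 1] by (simp add: exp_minus field_simps)
  finally have "2 * (1 - 1 / real N) ^ N \<le> 1"
    by simp
  then have "2 * ((real N - 1) / real N) ^ N \<le> 1"
    using N by (simp add: diff_divide_distrib)
  then have "2 * (real N - 1) ^ N \<le> real N ^ N"
    using N by (simp add: power_divide field_simps)
  then have "real (2 * (N - 1) ^ N) \<le> real (N ^ N)"
    using assms by (simp add: of_nat_diff)
  then show ?thesis
    by (simp only: of_nat_le_iff)
qed

text \<open>Requiring a map D \<rightarrow> Y to avoid b on at least k \<cdot> |Y| positions cuts the
  number of maps by a factor 2^k: each block of |Y| positions contributes
  (1 - 1/|Y|)^|Y| \<le> 1/2.\<close>

lemma card_maps_avoiding_le:
  assumes "finite D" "E \<subseteq> D" "b \<in> Y" "finite Y"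
    and large: "card Y * k \<le> card E"
  shows "card {G \<in> PiE D (\<lambda>_. Y). \<forall>x\<in>E. G x \<noteq> b} * 2 ^ k \<le> card Y ^ card D"
proof -
  define N where "N = card Y"
  have N: "N \<ge> 1"
    using assms(3,4) by (auto simp: N_def Suc_le_eq card_gt_0_iff)
  have ED: "card E \<le> card D"
    using assms(1,2) by (rule card_mono)
  have "card {G \<in> PiE D (\<lambda>_. Y). \<forall>x\<in>E. G x \<noteq> b} * 2 ^ k
          = (N - 1) ^ card E * N ^ (card D - card E) * 2 ^ k"
    using assms by (simp add: card_maps_avoiding N_def)
  also have "\<dots> \<le> (N - 1) ^ (N * k) * N ^ (card D - N * k) * 2 ^ k"
    using power_trade_mono[of "N - 1" N "N * k" "card E" "card D"] large ED
    by (simp add: N_def)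
  also have "\<dots> = (2 * (N - 1) ^ N) ^ k * N ^ (card D - N * k)"
    by (simp add: power_mult power_mult_distrib)
  also have "\<dots> \<le> (N ^ N) ^ k * N ^ (card D - N * k)"
    using two_mult_pred_power_le[OF N] by (intro mult_right_mono power_mono) auto
  also have "\<dots> = N ^ card D"
    using large ED by (simp add: N_def power_mult[symmetric] power_add[symmetric])
  finally show ?thesis
    by (simp add: N_def)
qed

text \<open>The candidate bad triples (b, I, A), even without the size condition on I,
  number at most 2^m \<cdot> 2^T \<cdot> (2^n)^s; for s = 8 \<cdot> 2^m this is below 2^(4T).\<close>

lemma card_triples_le:
  "card (bstr m \<times> Pow {1..T} \<times> {A. A \<subseteq> bstr n \<and> card A = s}) \<le> 2 ^ (m + T + n * s)"
proof -
  have "(2 ^ n choose s) \<le> ((2 :: nat) ^ n) ^ s"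
    by (cases "s \<le> 2 ^ n") (simp_all add: binomial_le_pow binomial_eq_0)
  then show ?thesis
    by (simp add: card_cartesian_product card_bstr finite_bstr n_subsets card_Pow
        power_add power_mult)
qed

definition hitting_family ::
    "nat \<Rightarrow> nat \<Rightarrow> nat \<Rightarrow> nat \<Rightarrow> (nat \<Rightarrow> bool list \<Rightarrow> bool list) \<Rightarrow> bool" where
  "hitting_family n m T s F \<longleftrightarrow>
     (\<forall>b\<in>bstr m. \<forall>I A. I \<subseteq> {1..T} \<and> T \<le> 2 * card I \<and> A \<subseteq> bstr n \<and> card A = s
        \<longrightarrow> (\<exists>i\<in>I. \<exists>a\<in>A. F i a = b))"

lemma hitting_family_few_avoiders:
  assumes "hitting_family n m T s F" "b \<in> bstr m" "I \<subseteq> {1..T}" "T \<le> 2 * card I"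
  shows "card {a \<in> bstr n. \<forall>i\<in>I. F i a \<noteq> b} < s"
proof (rule ccontr)
  assume "\<not> ?thesis"
  then obtain A where A: "A \<subseteq> {a \<in> bstr n. \<forall>i\<in>I. F i a \<noteq> b}" "card A = s"
    by (meson not_less obtain_subset_with_card_n)
  then have "\<exists>i\<in>I. \<exists>a\<in>A. F i a = b"
    using assms unfolding hitting_family_def by blast
  with A(1) show False
    by blast
qed

lemma hitting_family_exists:
  fixes n m :: nat
  assumes "n > 0"
  defines "T \<equiv> 4 * n * 2 ^ m"
  shows "\<exists>F. (\<forall>i\<in>{1..T}. \<forall>a\<in>bstr n. F i a \<in> bstr m) \<and> hitting_family n m T (8 * 2 ^ m) F"
proof -
  define N :: nat where "N = 2 ^ m"
  define s where "s = 8 * N"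
  define Dom where "Dom = {1..T} \<times> bstr n"
  define \<Omega> where "\<Omega> = PiE Dom (\<lambda>_. bstr m)"
  define Z where "Z = {(b, I, A). b \<in> bstr m \<and> I \<subseteq> {1..T} \<and> T \<le> 2 * card I
                                 \<and> A \<subseteq> bstr n \<and> card A = s}"
  define S where "S = (\<lambda>(b, I, A). {G \<in> \<Omega>. \<forall>x\<in>I \<times> A. G x \<noteq> b})"
  have finDom: "finite Dom"
    by (simp add: Dom_def finite_bstr)
  have Z_sub: "Z \<subseteq> bstr m \<times> Pow {1..T} \<times> {A. A \<subseteq> bstr n \<and> card A = s}"
    by (auto simp: Z_def)
  have finZ: "finite Z"
    by (rule finite_subset[OF Z_sub]) (auto simp: finite_bstr)
  have bad_maps_few: "card (S z) * 2 ^ (4 * T) \<le> card \<Omega>" if "z \<in> Z" for z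
  proof -
    obtain b I A where z: "z = (b, I, A)" and b: "b \<in> bstr m" and I: "I \<subseteq> {1..T}"
      "T \<le> 2 * card I" and A: "A \<subseteq> bstr n" "card A = s"
      using \<open>z \<in> Z\<close> by (auto simp: Z_def)
    have "card (bstr m) * (4 * T) \<le> card I * card A"
      using I(2) by (simp add: A(2) s_def N_def card_bstr)
    also have "\<dots> = card (I \<times> A)"
      by (simp add: card_cartesian_product)
    finally have "card {G \<in> \<Omega>. \<forall>x\<in>I \<times> A. G x \<noteq> b} * 2 ^ (4 * T) \<le> card (bstr m) ^ card Dom"
      unfolding \<Omega>_def using I A b finDom
      by (intro card_maps_avoiding_le) (auto simp: Dom_def finite_bstr)
    then show ?thesis
      using finDom by (simp add: z S_def \<Omega>_def card_PiE)
  qed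
  have "card Z < 2 ^ (4 * T)"
  proof -
    have "m < 2 ^ m"
      by (rule less_exp)
    also have "\<dots> \<le> T"
      using \<open>n > 0\<close> by (simp add: T_def)
    finally have "m < T" .
    then have "m + T + n * s < 4 * T"
      by (simp add: s_def N_def T_def)
    then have "(2::nat) ^ (m + T + n * s) < 2 ^ (4 * T)"
      by (rule power_strict_increasing) simp
    moreover have "card Z \<le> card (bstr m \<times> Pow {1..T} \<times> {A. A \<subseteq> bstr n \<and> card A = s})"
      by (rule card_mono[OF _ Z_sub]) (simp add: finite_bstr)
    moreover note card_triples_le[of m T n s]
    ultimately show ?thesis
      by linarith
  qed
  moreover have "finite \<Omega>" "\<Omega> \<noteq> {}"
    using finDom finite_bstr[of m] bstr_def[of m]
    by (auto simp: \<Omega>_def finite_PiE PiE_eq_empty_iff Ex_list_of_length)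
  moreover have "S z \<subseteq> \<Omega>" for z
    by (auto simp: S_def split: prod.split)
  ultimately obtain G where G: "G \<in> \<Omega>" and good: "\<forall>z\<in>Z. G \<notin> S z"
    using union_bound_avoidance[of \<Omega> Z S "2 ^ (4 * T)"] finZ bad_maps_few by blast
  have "hitting_family n m T s (\<lambda>i a. G (i, a))"
    unfolding hitting_family_def
  proof (intro ballI allI impI)
    fix b I A
    assume "b \<in> bstr m" "I \<subseteq> {1..T} \<and> T \<le> 2 * card I \<and> A \<subseteq> bstr n \<and> card A = s"
    then have "(b, I, A) \<in> Z"
      by (simp add: Z_def)
    then have "G \<notin> S (b, I, A)"
      using good by blast
    then show "\<exists>i\<in>I. \<exists>a\<in>A. G (i, a) = b"
      using G by (auto simp: S_def)
  qed
  moreover have "\<forall>i\<in>{1..T}. \<forall>a\<in>bstr n. G (i, a) \<in> bstr m"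
    using G by (auto simp: \<Omega>_def Dom_def PiE_iff)
  ultimately show ?thesis
    unfolding s_def N_def by (intro exI[of _ "\<lambda>i a. G (i, a)"] conjI)
qed

theorem mainTheorem5:
  shows "\<exists>K k D :: real. K > 0 \<and> k > 0 \<and> D > 0 \<and>
    (\<forall>n m :: nat. 0 < m \<and> m \<le> n \<longrightarrow>
      (\<exists>(T :: nat) (F :: nat \<Rightarrow> bool list \<Rightarrow> bool list).
         real T \<le> K * 2 ^ m * real n powr k \<and>
         (\<forall>i\<in>{1..T}. \<forall>a\<in>bstr n. F i a \<in> bstr m) \<and>
         (\<forall>b\<in>bstr m. \<forall>I. I \<subseteq> {1..T} \<and> real (card I) \<ge> real T / 2 \<longrightarrow>
            real (card {a\<in>bstr n. \<forall>i\<in>I. F i a \<noteq> b}) \<le> D * 2 ^ m)))"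
proof (rule exI[of _ 4], rule exI[of _ 1], rule exI[of _ 8], intro conjI allI impI)
  fix n m :: nat
  assume "0 < m \<and> m \<le> n"
  then have "n > 0"
    by simp
  define T where "T = 4 * n * 2 ^ m"
  obtain F where maps: "\<forall>i\<in>{1..T}. \<forall>a\<in>bstr n. F i a \<in> bstr m"
    and hitting: "hitting_family n m T (8 * 2 ^ m) F"
    using hitting_family_exists[OF \<open>n > 0\<close>, of m] by (auto simp: T_def)
  have "real T \<le> 4 * 2 ^ m * real n powr 1"
    using \<open>n > 0\<close> by (simp add: T_def)
  moreover have "real (card {a \<in> bstr n. \<forall>i\<in>I. F i a \<noteq> b}) \<le> 8 * 2 ^ m"
    if "b \<in> bstr m" "I \<subseteq> {1..T} \<and> real (card I) \<ge> real T / 2" for b I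
  proof -
    have "card {a \<in> bstr n. \<forall>i\<in>I. F i a \<noteq> b} < 8 * 2 ^ m"
      using that by (intro hitting_family_few_avoiders[OF hitting]) auto
    then have "real (card {a \<in> bstr n. \<forall>i\<in>I. F i a \<noteq> b}) < real (8 * 2 ^ m)"
      by (simp only: of_nat_less_iff)
    then show ?thesis
      by simp
  qed
  ultimately show "\<exists>T F. real T \<le> 4 * 2 ^ m * real n powr 1 \<and>
      (\<forall>i\<in>{1..T}. \<forall>a\<in>bstr n. F i a \<in> bstr m) \<and>
      (\<forall>b\<in>bstr m. \<forall>I. I \<subseteq> {1..T} \<and> real (card I) \<ge> real T / 2 \<longrightarrow>
         real (card {a \<in> bstr n. \<forall>i\<in>I. F i a \<noteq> b}) \<le> 8 * 2 ^ m)"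
    using maps by blast
qed simp_all

end
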